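(* For all integers $0\le k\le j$, $$\sum_{h=k}^j(-q)^ha^hq^{k^2-2jh}{h\brack k}_+\,a^{-j+h}q^{(j-h)^2}{j\brack h}_+\frac{(a^2q^{2-2j};q^2)_{j-h}}{(q^2;q^2)_{j-h}}=(-q)^ka^{2k-j}q^{-4kj+2k^2+j^2}{j\brack k}_+\frac{(a^2q^{2-4j+2k};q^2)_{j-k}}{(q^2;q^2)_{j-k}}.$$
   Context: $(x;q^2)_n=\prod_{i=0}^{n-1}(1-xq^{2i})$, $(q^2;q^2)_n=\prod_{i=1}^n(1-q^{2i})$, and ${N\brack k}_+=\frac{(q^2;q^2)_N}{(q^2;q^2)_k(q^2;q^2)_{N-k}}$. (The identity expresses the reduced North–South closure of a top twist applied to the basis web $RI[j,k]$.) *)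

theory Defs
  imports Complex_Main
begin

definition qpoch2 :: "'a::field \<Rightarrow> 'a \<Rightarrow> nat \<Rightarrow> 'a" where
  "qpoch2 x q n = (\<Prod>i<n. (1 - x * q ^ (2 * i)))"

definition qfac2 :: "'a::field \<Rightarrow> nat \<Rightarrow> 'a" where
  "qfac2 q n = (\<Prod>i\<in>{1..n}. (1 - q ^ (2 * i)))"

definition qbinp :: "'a::field \<Rightarrow> nat \<Rightarrow> nat \<Rightarrow> 'a" where
  "qbinp q N k = qfac2 q N / (qfac2 q k * qfac2 q (N - k))"

end

theory Submission
  imports Defs
begin

text \<open>Write Q = q^2, j = k + n and h = k + m, and let [n, m] be the Gaussian binomial in base Q.
  Then [h, k]_+ [j, h]_+ = [j, k]_+ [n, m], and the monomial prefactor of the h-th summand is that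
  of the right-hand side times x^m (-1)^m Q^(m(m-1)/2 - nm), where x = a^2 q^(2-2j). Since
  (Q^-n; Q)_m = (-1)^m Q^(m(m-1)/2 - nm) (Q; Q)_n / (Q; Q)_(n-m), the sum is a multiple of
  sum_m [n, m] x^m (Q^-n; Q)_m (x; Q)_(n-m), which the q-Chu-Vandermonde expansion of
  (ab; Q)_n evaluates to (Q^-n x; Q)_n.\<close>

(* Gaussian binomial via the q-Pascal rule: no division, so it lives in any commutative ring. *)
fun qbinomial :: "'a::comm_ring_1 \<Rightarrow> nat \<Rightarrow> nat \<Rightarrow> 'a" where
  "qbinomial Q 0 k = (if k = 0 then 1 else 0)"
| "qbinomial Q (Suc n) 0 = 1"
| "qbinomial Q (Suc n) (Suc k) = qbinomial Q n (Suc k) + Q ^ (n - k) * qbinomial Q n k"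

definition qpochhammer :: "'a::comm_ring_1 \<Rightarrow> 'a \<Rightarrow> nat \<Rightarrow> 'a" where
  "qpochhammer x Q n = (\<Prod>i<n. 1 - x * Q ^ i)"

lemma qpochhammer_0 [simp]: "qpochhammer x Q 0 = 1"
  by (simp add: qpochhammer_def)

lemma qpochhammer_Suc: "qpochhammer x Q (Suc n) = qpochhammer x Q n * (1 - x * Q ^ n)"
  by (simp add: qpochhammer_def)

lemma qpochhammer_self_Suc: "qpochhammer Q Q (Suc n) = qpochhammer Q Q n * (1 - Q ^ Suc n)"
  by (simp add: qpochhammer_Suc)

lemma qbinomial_n_0 [simp]: "qbinomial Q n 0 = 1"
  by (cases n) auto

lemma qbinomial_eq_0: "n < k \<Longrightarrow> qbinomial Q n k = 0"
  by (induction Q n k rule: qbinomial.induct) auto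

lemma qbinomial_Suc:
  "qbinomial Q (Suc n) k = qbinomial Q n k + (if k = 0 then 0 else Q ^ (Suc n - k) * qbinomial Q n (k - 1))"
  by (cases k) auto

lemma qpochhammer_expansion_step:
  fixes a b Q :: "'a::comm_ring_1"
  assumes "k \<le> n"
  shows "b ^ k * qpochhammer a Q k * qpochhammer b Q (Suc n - k)
           + Q ^ (n - k) * (b ^ Suc k * qpochhammer a Q (Suc k) * qpochhammer b Q (n - k))
         = (1 - a * b * Q ^ n) * (b ^ k * qpochhammer a Q k * qpochhammer b Q (n - k))"
proof -
  obtain d where "n = k + d"
    using assms le_Suc_ex by blast
  then show ?thesis
    by (simp add: qpochhammer_Suc power_add algebra_simps)
qed

lemma qpochhammer_mult_expansion:
  fixes a b Q :: "'a::comm_ring_1"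
  shows "qpochhammer (a * b) Q n
           = (\<Sum>k\<le>n. qbinomial Q n k * (b ^ k * qpochhammer a Q k * qpochhammer b Q (n - k)))"
proof (induction n)
  case 0
  show ?case by simp
next
  case (Suc n)
  define T where "T n k = b ^ k * qpochhammer a Q k * qpochhammer b Q (n - k)" for n k
  have "(\<Sum>k\<le>Suc n. qbinomial Q (Suc n) k * T (Suc n) k)
      = (\<Sum>k\<le>Suc n. qbinomial Q n k * T (Suc n) k)
        + (\<Sum>k\<le>Suc n. (if k = 0 then 0 else Q ^ (Suc n - k) * qbinomial Q n (k - 1)) * T (Suc n) k)"
    by (simp add: qbinomial_Suc sum.distrib distrib_right)
  also have "\<dots> = (\<Sum>k\<le>n. qbinomial Q n k * T (Suc n) k)
                  + (\<Sum>k\<le>n. qbinomial Q n k * (Q ^ (n - k) * T (Suc n) (Suc k)))"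
  proof -
    have "(\<Sum>k\<le>Suc n. qbinomial Q n k * T (Suc n) k) = (\<Sum>k\<le>n. qbinomial Q n k * T (Suc n) k)"
      by (simp add: qbinomial_eq_0)
    moreover have "(\<Sum>k\<le>Suc n. (if k = 0 then 0 else Q ^ (Suc n - k) * qbinomial Q n (k - 1)) * T (Suc n) k)
        = (\<Sum>k\<le>n. qbinomial Q n k * (Q ^ (n - k) * T (Suc n) (Suc k)))"
      by (subst sum.atMost_Suc_shift) (simp add: mult_ac)
    ultimately show ?thesis
      by simp
  qed
  also have "\<dots> = (\<Sum>k\<le>n. qbinomial Q n k * ((1 - a * b * Q ^ n) * T n k))"
    unfolding sum.distrib[symmetric] distrib_left[symmetric]
    by (intro sum.cong) (simp_all add: T_def qpochhammer_expansion_step del: power_Suc)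
  also have "\<dots> = qpochhammer (a * b) Q (Suc n)"
    by (simp add: Suc T_def qpochhammer_Suc sum_distrib_left mult_ac)
  finally show ?case
    by (simp add: T_def)
qed

lemma qbinomial_mult_qpochhammer:
  fixes Q :: "'a::comm_ring_1"
  assumes "k \<le> n"
  shows "qbinomial Q n k * qpochhammer Q Q k * qpochhammer Q Q (n - k) = qpochhammer Q Q n"
  using assms
proof (induction n arbitrary: k)
  case 0
  then show ?case by simp
next
  case (Suc n)
  show ?case
  proof (cases k)
    case 0
    then show ?thesis by simp
  next
    case (Suc i)
    then have "i \<le> n"
      using Suc.prems by simp
    have upper: "qbinomial Q n (Suc i) * qpochhammer Q Q (Suc i) * qpochhammer Q Q (n - i)
        = qpochhammer Q Q n * (1 - Q ^ (n - i))"
    proof (cases "i < n")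
      case True
      then have "qpochhammer Q Q (n - i) = qpochhammer Q Q (n - Suc i) * (1 - Q ^ (n - i))"
        by (metis Suc_diff_Suc qpochhammer_self_Suc)
      then show ?thesis
        using Suc.IH[of "Suc i"] True by (metis Suc_leI mult.assoc)
    next
      case False
      then show ?thesis
        using \<open>i \<le> n\<close> by (simp add: qbinomial_eq_0)
    qed
    have lower: "qbinomial Q n i * qpochhammer Q Q i * qpochhammer Q Q (n - i) = qpochhammer Q Q n"
      using Suc.IH[OF \<open>i \<le> n\<close>] .
    obtain d where "n = i + d"
      using \<open>i \<le> n\<close> le_Suc_ex by blast
    then have powers: "Q ^ (n - i) * Q ^ Suc i = Q ^ Suc n"
      by (simp add: power_add mult_ac)
    have "qbinomial Q (Suc n) k * qpochhammer Q Q k * qpochhammer Q Q (Suc n - k)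
        = qbinomial Q n (Suc i) * qpochhammer Q Q (Suc i) * qpochhammer Q Q (n - i)
          + Q ^ (n - i) * (qbinomial Q n i * qpochhammer Q Q i * qpochhammer Q Q (n - i))
            * (1 - Q ^ Suc i)"
      using \<open>k = Suc i\<close> by (simp add: qpochhammer_self_Suc algebra_simps del: power_Suc)
    also have "\<dots> = qpochhammer Q Q n * (1 - Q ^ (n - i)) + Q ^ (n - i) * qpochhammer Q Q n * (1 - Q ^ Suc i)"
      unfolding upper lower ..
    also have "\<dots> = qpochhammer Q Q (Suc n)"
      using powers by (simp add: qpochhammer_self_Suc algebra_simps del: power_Suc)
    finally show ?thesis .
  qed
qed

lemma qpochhammer_inverse_power:
  fixes Q :: "'a::field"
  assumes "Q \<noteq> 0" and "m \<le> n"
  shows "qpochhammer (Q powi (- int n)) Q m * qpochhammer Q Q (n - m)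
           = (-1) ^ m * Q powi (int (m choose 2) - int n * int m) * qpochhammer Q Q n"
  using assms(2)
proof (induction m)
  case 0
  show ?case by (simp add: binomial_eq_0)
next
  case (Suc m)
  have split: "qpochhammer Q Q (n - m) = qpochhammer Q Q (n - Suc m) * (1 - Q ^ (n - m))"
    using Suc.prems by (metis Suc_diff_Suc Suc_le_lessD qpochhammer_self_Suc)
  have factor: "1 - Q powi (- int n) * Q ^ m = - (Q powi (int m - int n)) * (1 - Q ^ (n - m))"
    using assms(1) Suc.prems
    by (simp add: algebra_simps power_int_diff of_nat_diff flip: power_int_add power_int_of_nat)
  have "qpochhammer (Q powi (- int n)) Q (Suc m) * qpochhammer Q Q (n - Suc m)
      = - (Q powi (int m - int n)) * (qpochhammer (Q powi (- int n)) Q m * qpochhammer Q Q (n - m))"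
    unfolding qpochhammer_Suc split factor by (simp add: mult_ac)
  also have "\<dots> = (-1) ^ Suc m * Q powi (int (Suc m choose 2) - int n * int (Suc m)) * qpochhammer Q Q n"
    using Suc assms(1) by (simp add: numeral_2_eq_2 algebra_simps flip: power_int_add)
  finally show ?case .
qed

lemma qfac2_eq_qpochhammer: "qfac2 q n = qpochhammer (q\<^sup>2) (q\<^sup>2) n"
  by (induction n) (simp_all add: qfac2_def prod.nat_ivl_Suc' qpochhammer_Suc mult.commute flip: power_mult power_add)

lemma qpoch2_eq_qpochhammer: "qpoch2 x q n = qpochhammer x (q\<^sup>2) n"
  by (simp add: qpoch2_def qpochhammer_def power_mult)

lemma qfac2_nonzero:
  assumes "\<forall>i\<in>{1..j}. 1 - q ^ (2 * i) \<noteq> 0" and "n \<le> j"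
  shows "qfac2 q n \<noteq> 0"
  using assms by (auto simp: qfac2_def)

lemma qbinomial_eq_qbinp:
  fixes q :: "'a::field"
  assumes "\<forall>i\<in>{1..n}. 1 - q ^ (2 * i) \<noteq> 0" and "k \<le> n"
  shows "qbinomial (q\<^sup>2) n k = qbinp q n k"
  using qbinomial_mult_qpochhammer[OF assms(2), of "q\<^sup>2"] qfac2_nonzero[OF assms(1)] assms(2)
  by (simp add: qbinp_def qfac2_eq_qpochhammer field_simps)

lemma qbinp_mult_qbinp:
  fixes q :: "'a::field"
  assumes "\<forall>i\<in>{1..j}. 1 - q ^ (2 * i) \<noteq> 0" and "k \<le> h" and "h \<le> j"
  shows "qbinp q h k * qbinp q j h = qbinp q j k * qbinp q (j - k) (h - k)"
  using qfac2_nonzero[OF assms(1)] assms(2,3)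
  by (simp add: qbinp_def field_simps)

lemma two_mult_choose_two: "2 * int (m choose 2) = int m * (int m - 1)"
  by (induction m) (simp_all add: numeral_2_eq_2 algebra_simps)

lemma summand_prefactor:
  fixes a q :: "'a::field" and k m n :: nat
  assumes "a \<noteq> 0" and "q \<noteq> 0" and "m \<le> n"
  shows "(-q) ^ (k + m) * a ^ (k + m) * q powi (int k ^ 2 - 2 * int (k + n) * int (k + m))
           * a powi (int (k + m) - int (k + n)) * q ^ ((n - m) ^ 2)
       = (-q) ^ k * a powi (2 * int k - int (k + n))
           * q powi (- 4 * int k * int (k + n) + 2 * int k ^ 2 + int (k + n) ^ 2)
           * (a ^ 2 * q powi (2 - 2 * int (k + n))) ^ m
           * ((-1) ^ m * (q ^ 2) powi (int (m choose 2) - int n * int m))"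
proof -
  obtain d where n: "n = m + d"
    using assms(3) le_Suc_ex by blast
  have combine_q: "q powi u * q powi v = q powi (u + v)" for u v
    using assms(2) by (simp add: power_int_add)
  have combine_a: "a powi u * a powi v = a powi (u + v)" for u v
    using assms(1) by (simp add: power_int_add)
  have lhs: "(-q) ^ (k + m) * a ^ (k + m) * q powi (int k ^ 2 - 2 * int (k + n) * int (k + m))
           * a powi (int (k + m) - int (k + n)) * q ^ ((n - m) ^ 2)
     = (-1) ^ (k + m) * (a powi int (k + m) * a powi (int (k + m) - int (k + n)))
       * (q powi int (k + m) * q powi (int k ^ 2 - 2 * int (k + n) * int (k + m)) * q powi (int d ^ 2))"
    unfolding n power_minus[of q]
    by (simp add: power_int_of_nat[of q, symmetric] power_int_of_nat[of a, symmetric] mult_ac)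
  have "(a ^ 2) ^ m = a powi (2 * int m)"
    by (metis of_nat_mult of_nat_numeral power_int_of_nat power_mult)
  then have base: "(a ^ 2 * q powi (2 - 2 * int (k + n))) ^ m
      = a powi (2 * int m) * q powi ((2 - 2 * int (k + n)) * int m)"
    by (simp add: power_mult_distrib power_int_power' del: power_int_of_nat)
  have rhs: "(-q) ^ k * a powi (2 * int k - int (k + n))
           * q powi (- 4 * int k * int (k + n) + 2 * int k ^ 2 + int (k + n) ^ 2)
           * (a ^ 2 * q powi (2 - 2 * int (k + n))) ^ m
           * ((-1) ^ m * (q ^ 2) powi (int (m choose 2) - int n * int m))
     = (-1) ^ (k + m) * (a powi (2 * int k - int (k + n)) * a powi (2 * int m))
       * (q powi int k * q powi (- 4 * int k * int (k + n) + 2 * int k ^ 2 + int (k + n) ^ 2)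
          * q powi ((2 - 2 * int (k + n)) * int m) * q powi (2 * (int (m choose 2) - int n * int m)))"
    unfolding base power_minus[of q] power_add power_int_power
    by (simp add: mult_ac del: power_int_of_nat) simp
  have "int (k + m) + (int (k + m) - int (k + n)) = (2 * int k - int (k + n)) + 2 * int m"
    by simp
  moreover have "int (k + m) + (int k ^ 2 - 2 * int (k + n) * int (k + m)) + int d ^ 2
     = int k + (- 4 * int k * int (k + n) + 2 * int k ^ 2 + int (k + n) ^ 2)
       + (2 - 2 * int (k + n)) * int m + 2 * (int (m choose 2) - int n * int m)"
    unfolding right_diff_distrib two_mult_choose_two
    by (simp add: n power2_eq_square algebra_simps)
  ultimately show ?thesis
    by (simp only: lhs rhs combine_q combine_a)
qed

lemma summand_factorization:
  fixes a q :: "'a::field" and k m n :: nat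
  defines "x \<equiv> a ^ 2 * q powi (2 - 2 * int (k + n))"
  assumes a: "a \<noteq> 0" and q: "q \<noteq> 0"
    and nonvanishing: "\<forall>i\<in>{1..k + n}. 1 - q ^ (2 * i) \<noteq> 0" and "m \<le> n"
  shows "(-q) ^ (k + m) * a ^ (k + m) * q powi (int k ^ 2 - 2 * int (k + n) * int (k + m))
           * qbinp q (k + m) k * a powi (int (k + m) - int (k + n)) * q ^ ((k + n - (k + m)) ^ 2)
           * qbinp q (k + n) (k + m) * qpoch2 x q (k + n - (k + m)) / qfac2 q (k + n - (k + m))
       = (-q) ^ k * a powi (2 * int k - int (k + n))
           * q powi (- 4 * int k * int (k + n) + 2 * int k ^ 2 + int (k + n) ^ 2)
           * qbinp q (k + n) k / qfac2 q n
           * (qbinomial (q\<^sup>2) n m * (x ^ m * qpochhammer ((q\<^sup>2) powi (- int n)) (q\<^sup>2) m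
              * qpochhammer x (q\<^sup>2) (n - m)))"
    (is "?lhs = ?rhs")
proof -
  have nonzero: "qfac2 q i \<noteq> 0" if "i \<le> n" for i
    using qfac2_nonzero[OF nonvanishing] that by simp
  have "qbinp q (k + m) k * qbinp q (k + n) (k + m) = qbinp q (k + n) k * qbinp q n m"
    using qbinp_mult_qbinp[OF nonvanishing] \<open>m \<le> n\<close> by simp
  also have "qbinp q n m = qbinomial (q\<^sup>2) n m"
    using nonvanishing \<open>m \<le> n\<close> by (simp add: qbinomial_eq_qbinp)
  finally have binomials: "qbinp q (k + m) k * qbinp q (k + n) (k + m) = qbinp q (k + n) k * qbinomial (q\<^sup>2) n m" .
  have "qpochhammer ((q\<^sup>2) powi (- int n)) (q\<^sup>2) m * qfac2 q (n - m)
      = (-1) ^ m * (q\<^sup>2) powi (int (m choose 2) - int n * int m) * qfac2 q n"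
    using qpochhammer_inverse_power[of "q\<^sup>2" m n] q \<open>m \<le> n\<close> by (simp add: qfac2_eq_qpochhammer)
  then have pochhammer: "qpochhammer ((q\<^sup>2) powi (- int n)) (q\<^sup>2) m
      = (-1) ^ m * (q\<^sup>2) powi (int (m choose 2) - int n * int m) * qfac2 q n / qfac2 q (n - m)"
    using nonzero[of "n - m"] by (simp add: field_simps)
  define P where "P = (-q) ^ k * a powi (2 * int k - int (k + n))
           * q powi (- 4 * int k * int (k + n) + 2 * int k ^ 2 + int (k + n) ^ 2)"
  define e where "e = (-1) ^ m * (q\<^sup>2) powi (int (m choose 2) - int n * int m)"
  have "k + n - (k + m) = n - m"
    by simp
  then have "?lhs = ((-q) ^ (k + m) * a ^ (k + m) * q powi (int k ^ 2 - 2 * int (k + n) * int (k + m))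
           * a powi (int (k + m) - int (k + n)) * q ^ ((n - m) ^ 2))
        * (qbinp q (k + m) k * qbinp q (k + n) (k + m))
        * (qpochhammer x (q\<^sup>2) (n - m) / qfac2 q (n - m))"
    by (simp add: qpoch2_eq_qpochhammer mult_ac)
  also have "\<dots> = P * x ^ m * e * (qbinp q (k + n) k * qbinomial (q\<^sup>2) n m)
        * (qpochhammer x (q\<^sup>2) (n - m) / qfac2 q (n - m))"
    unfolding summand_prefactor[OF a q \<open>m \<le> n\<close>] binomials P_def e_def x_def ..
  also have "\<dots> = ?rhs"
    using nonzero[of n] nonzero[of "n - m"] unfolding pochhammer P_def[symmetric] e_def[symmetric]
    by (simp add: field_simps)
  finally show ?thesis .
qed

theorem mainTheorem8:
  fixes a q :: "'a::field" and j k :: nat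
  assumes "a \<noteq> 0" and "q \<noteq> 0"
    and "\<forall>i\<in>{1..j}. 1 - q ^ (2 * i) \<noteq> 0"
    and "k \<le> j"
  shows "(\<Sum>h=k..j. (-q) ^ h * a ^ h * power_int q (int k ^ 2 - 2 * int j * int h)
            * qbinp q h k * power_int a (int h - int j) * q ^ ((j - h) ^ 2) * qbinp q j h
            * qpoch2 (a ^ 2 * power_int q (2 - 2 * int j)) q (j - h) / qfac2 q (j - h))
       = (-q) ^ k * power_int a (2 * int k - int j)
           * power_int q (- 4 * int k * int j + 2 * int k ^ 2 + int j ^ 2) * qbinp q j k
           * qpoch2 (a ^ 2 * power_int q (2 - 4 * int j + 2 * int k)) q (j - k) / qfac2 q (j - k)"
proof -
  obtain n where j: "j = k + n"
    using assms(4) le_Suc_ex by blast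
  define x where "x = a ^ 2 * q powi (2 - 2 * int j)"
  define C where "C = (-q) ^ k * a powi (2 * int k - int j)
           * q powi (- 4 * int k * int j + 2 * int k ^ 2 + int j ^ 2) * qbinp q j k / qfac2 q n"
  have "(q\<^sup>2) powi (- int n) * q powi (2 - 2 * int j) = q powi (2 - 4 * int j + 2 * int k)"
    using assms(2) by (simp add: power_int_power j flip: power_int_add) (simp add: algebra_simps)
  then have rhs_base: "a ^ 2 * q powi (2 - 4 * int j + 2 * int k) = (q\<^sup>2) powi (- int n) * x"
    by (simp add: x_def mult_ac)
  have "(\<Sum>h=k..j. (-q) ^ h * a ^ h * q powi (int k ^ 2 - 2 * int j * int h)
            * qbinp q h k * a powi (int h - int j) * q ^ ((j - h) ^ 2) * qbinp q j h
            * qpoch2 x q (j - h) / qfac2 q (j - h))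
      = (\<Sum>m\<le>n. C * (qbinomial (q\<^sup>2) n m
          * (x ^ m * qpochhammer ((q\<^sup>2) powi (- int n)) (q\<^sup>2) m * qpochhammer x (q\<^sup>2) (n - m))))"
    using summand_factorization[OF assms(1,2), of k n] assms(3)
    unfolding sum.atLeastAtMost_shift_0[OF assms(4)] atLeast0AtMost
    by (intro sum.cong) (simp_all add: j x_def C_def)
  also have "\<dots> = C * qpoch2 ((q\<^sup>2) powi (- int n) * x) q n"
    by (simp add: qpochhammer_mult_expansion qpoch2_eq_qpochhammer sum_distrib_left)
  finally show ?thesis
    unfolding x_def[symmetric] rhs_base by (simp add: C_def j)
qed

end
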